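(* Let $(X,T)$ be a topological dynamical system and let $K\subset X$ be a compact set. Then $K$ has bounded topological complexity with respect to $\{d_n\}$ if and only if $K$ is equicontinuous.
   Context: A topological dynamical system (t.d.s.) $(X,T)$ consists of a compact metric space $(X,d)$ and a continuous map $T\colon X\to X$. For $n\in\mathbb{N}$ and $x,y\in X$ let $d_n(x,y)=\max\{d(T^ix,T^iy)\colon 0\le i\le n-1\}$, and $B_{d_n}(x,\varepsilon)=\{y\in X\colon d_n(x,y)<\varepsilon\}$. For $K\subset X$ let $\mathrm{span}_K(n,\varepsilon)=\min\{\#(F)\colon F\subset K,\ K\subset\bigcup_{x\in F}B_{d_n}(x,\varepsilon)\}$. A subset $K$ has bounded topological complexity with respect to $\{d_n\}$ if for every $\varepsilon>0$ there is a positive integer $C$ with $\mathrm{span}_K(n,\varepsilon)\le C$ for all $n\ge1$. A subset $K\subset X$ is equicontinuous if for every $\varepsilon>0$ there is $\delta>0$ such that $d(T^nx,T^ny)<\varepsilon$ for all $n\ge 0$ and all $x,y\in K$ with $d(x,y)<\delta$. *)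

theory Defs
  imports "HOL-Analysis.Analysis"
begin

definition tds :: "'a::metric_space set \<Rightarrow> ('a \<Rightarrow> 'a) \<Rightarrow> bool" where
  "tds X T \<longleftrightarrow> compact X \<and> continuous_on X T \<and> T ` X \<subseteq> X"

text \<open>Bowen metric d_n(x,y) = max over 0 \<le> i \<le> n-1 of d(T^i x, T^i y) (n \<ge> 1).\<close>
definition bowen_dist :: "('a::metric_space \<Rightarrow> 'a) \<Rightarrow> nat \<Rightarrow> 'a \<Rightarrow> 'a \<Rightarrow> real" where
  "bowen_dist T n x y = Max {dist ((T ^^ i) x) ((T ^^ i) y) | i. i < n}"

definition bowen_ball :: "('a::metric_space \<Rightarrow> 'a) \<Rightarrow> nat \<Rightarrow> 'a \<Rightarrow> real \<Rightarrow> 'a set" where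
  "bowen_ball T n x \<epsilon> = {y. bowen_dist T n x y < \<epsilon>}"

definition span_K :: "('a::metric_space \<Rightarrow> 'a) \<Rightarrow> 'a set \<Rightarrow> nat \<Rightarrow> real \<Rightarrow> nat" where
  "span_K T K n \<epsilon> = Inf {card F | F. finite F \<and> F \<subseteq> K \<and> K \<subseteq> (\<Union>x\<in>F. bowen_ball T n x \<epsilon>)}"

definition bounded_top_complexity :: "('a::metric_space \<Rightarrow> 'a) \<Rightarrow> 'a set \<Rightarrow> bool" where
  "bounded_top_complexity T K \<longleftrightarrow>
     (\<forall>\<epsilon>>0. \<exists>C::nat. C > 0 \<and> (\<forall>n\<ge>1. span_K T K n \<epsilon> \<le> C))"

definition equicontinuous_set :: "('a::metric_space \<Rightarrow> 'a) \<Rightarrow> 'a set \<Rightarrow> bool" where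
  "equicontinuous_set T K \<longleftrightarrow>
     (\<forall>\<epsilon>>0. \<exists>\<delta>>0. \<forall>n. \<forall>x\<in>K. \<forall>y\<in>K. dist x y < \<delta> \<longrightarrow> dist ((T ^^ n) x) ((T ^^ n) y) < \<epsilon>)"

end

theory Submission
  imports Defs
begin

text \<open>Equicontinuity turns one finite \<open>\<delta>\<close>-net of \<open>K\<close> into a \<open>d\<^sub>n\<close>-spanning set for every \<open>n\<close>
at once. Conversely, let \<open>span\<^sub>K(n, \<rho>/2) \<le> C\<close> for all \<open>n\<close>. Two points that become \<open>\<rho>\<close>-apart
before time \<open>n\<close> cannot lie in a common \<open>d\<^sub>n\<close>-ball of radius \<open>\<rho>/2\<close>, so a set whose points are
pairwise \<open>\<rho>\<close>-apart at some time has at most \<open>C\<close> elements, and a largest one \<open>E\<close> has the property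
that every orbit starting in \<open>K\<close> stays \<open>\<rho>\<close>-close to the orbit of some \<open>a \<in> E\<close>. The sets of points
of \<open>K\<close> shadowing \<open>a \<in> E\<close> in this way are compact, hence pairwise either intersecting or at positive
distance. Below the least such distance, two points of \<open>K\<close> shadow orbits that pass through a
common point, so their own orbits stay \<open>4\<rho>\<close>-close.\<close>

lemma separate_compact_compact:
  fixes S U :: "'a::metric_space set"
  assumes "compact S" "compact U" "S \<inter> U = {}"
  shows "\<exists>d>0. \<forall>x\<in>S. \<forall>y\<in>U. d \<le> dist x y"
proof (cases "S = {} \<or> U = {}")
  case True
  then show ?thesis by (auto intro: exI[of _ 1])
next
  case False
  have "continuous_on S (\<lambda>x. infdist x U)"
    by (intro continuous_intros)
  then obtain x0 where x0: "x0 \<in> S" "\<And>y. y \<in> S \<Longrightarrow> infdist x0 U \<le> infdist y U"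
    using continuous_attains_inf[OF assms(1)] False by blast
  have "infdist x0 U > 0"
    using x0(1) assms compact_imp_closed in_closed_iff_infdist_zero False
    by (metis disjoint_iff infdist_nonneg order_le_less)
  then show ?thesis
    using x0 infdist_le by (meson order_trans)
qed

lemma finite_common_delta:
  fixes R :: "'i \<Rightarrow> 'a::metric_space \<Rightarrow> 'a \<Rightarrow> bool"
  assumes "finite I" "\<And>i. i \<in> I \<Longrightarrow> \<exists>d>0. \<forall>x y. dist x y < d \<longrightarrow> R i x y"
  shows "\<exists>d>0. \<forall>i\<in>I. \<forall>x y. dist x y < d \<longrightarrow> R i x y"
  using assms
proof (induction I rule: finite_induct)
  case empty
  then show ?case by (auto intro: exI[of _ 1])
next
  case (insert j I)
  then obtain d where "d > 0" "\<forall>i\<in>I. \<forall>x y. dist x y < d \<longrightarrow> R i x y"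
    by blast
  moreover obtain d' where "d' > 0" "\<forall>x y. dist x y < d' \<longrightarrow> R j x y"
    using insert.prems by blast
  ultimately show ?case
    by (intro exI[of _ "min d d'"]) auto
qed

lemma finite_compact_family_meet_if_close:
  fixes S :: "'i \<Rightarrow> 'a::metric_space set"
  assumes "finite I" "\<And>i. i \<in> I \<Longrightarrow> compact (S i)"
  shows "\<exists>d>0. \<forall>i\<in>I. \<forall>j\<in>I. \<forall>x\<in>S i. \<forall>y\<in>S j. dist x y < d \<longrightarrow> S i \<inter> S j \<noteq> {}"
proof -
  define R where "R p x y \<longleftrightarrow> x \<in> S (fst p) \<longrightarrow> y \<in> S (snd p) \<longrightarrow> S (fst p) \<inter> S (snd p) \<noteq> {}" for p x y
  have "\<exists>d>0. \<forall>x y. dist x y < d \<longrightarrow> R p x y" if "p \<in> I \<times> I" for p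
  proof (cases "S (fst p) \<inter> S (snd p) = {}")
    case True
    with that assms(2) obtain d where "d > 0" "\<forall>x\<in>S (fst p). \<forall>y\<in>S (snd p). d \<le> dist x y"
      using separate_compact_compact by (metis mem_Times_iff)
    then show ?thesis
      unfolding R_def by (meson not_le)
  next
    case False
    then show ?thesis
      unfolding R_def using zero_less_one by blast
  qed
  then obtain d where "d > 0" and "\<forall>p\<in>I \<times> I. \<forall>x y. dist x y < d \<longrightarrow> R p x y"
    using finite_common_delta[OF finite_cartesian_product[OF assms(1,1)], of R] by blast
  then show ?thesis
    unfolding R_def by fastforce
qed

lemma tds_continuous_on_funpow:
  assumes "tds X T"
  shows "continuous_on X (T ^^ i)"
proof -
  have T: "continuous_on X T" "T ` X \<subseteq> X"
    using assms by (auto simp: tds_def)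
  have "continuous_on X (T ^^ i) \<and> (T ^^ i) ` X \<subseteq> X"
  proof (induction i)
    case (Suc i)
    then have "continuous_on X (T \<circ> (T ^^ i))"
      using T by (metis continuous_on_compose continuous_on_subset)
    with Suc T show ?case
      by (auto simp: image_subset_iff)
  qed (auto intro: continuous_on_id)
  then show ?thesis ..
qed

lemma bowen_dist_less_iff:
  assumes "n \<ge> 1"
  shows "bowen_dist T n x y < e \<longleftrightarrow> (\<forall>i<n. dist ((T ^^ i) x) ((T ^^ i) y) < e)"
proof -
  have "{dist ((T ^^ i) x) ((T ^^ i) y) | i. i < n} = (\<lambda>i. dist ((T ^^ i) x) ((T ^^ i) y)) ` {..<n}"
    by auto
  moreover have "{..<n} \<noteq> {}"
    using assms by (auto simp: lessThan_empty_iff)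
  ultimately show ?thesis
    unfolding bowen_dist_def by (subst Max_less_iff) auto
qed

lemma bowen_cover_of_net:
  assumes "n \<ge> 1" "F \<subseteq> K" "K \<subseteq> (\<Union>x\<in>F. ball x \<delta>)"
    and "\<And>i x y. i < n \<Longrightarrow> x \<in> K \<Longrightarrow> y \<in> K \<Longrightarrow> dist x y < \<delta> \<Longrightarrow>
           dist ((T ^^ i) x) ((T ^^ i) y) < e"
  shows "K \<subseteq> (\<Union>x\<in>F. bowen_ball T n x e)"
proof
  fix y
  assume "y \<in> K"
  then obtain x where "x \<in> F" "dist x y < \<delta>"
    using assms(3) by auto
  with \<open>y \<in> K\<close> assms(2,4) have "bowen_dist T n x y < e"
    unfolding bowen_dist_less_iff[OF assms(1)] by blast
  with \<open>x \<in> F\<close> show "y \<in> (\<Union>x\<in>F. bowen_ball T n x e)"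
    by (auto simp: bowen_ball_def)
qed

lemma compact_finite_net:
  fixes K :: "'a::metric_space set"
  assumes "compact K" "d > 0"
  shows "\<exists>F. finite F \<and> F \<subseteq> K \<and> K \<subseteq> (\<Union>x\<in>F. ball x d)"
  using seq_compact_imp_totally_bounded[OF compact_imp_seq_compact[OF assms(1)]] assms(2)
  by (elim allE impE) auto

lemma span_K_le_card:
  assumes "finite F" "F \<subseteq> K" "K \<subseteq> (\<Union>x\<in>F. bowen_ball T n x e)"
  shows "span_K T K n e \<le> card F"
  unfolding span_K_def using assms by (intro cInf_lower) auto

lemma bowen_cover_exists:
  assumes "compact K" "\<And>i. continuous_on K (T ^^ i)" "n \<ge> 1" "e > 0"
  shows "\<exists>F. finite F \<and> F \<subseteq> K \<and> K \<subseteq> (\<Union>x\<in>F. bowen_ball T n x e)"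
proof -
  have "\<exists>d>0. \<forall>x y. dist x y < d \<longrightarrow> x \<in> K \<longrightarrow> y \<in> K \<longrightarrow> dist ((T ^^ i) x) ((T ^^ i) y) < e"
    for i
    using uniformly_continuous_onE[OF compact_uniformly_continuous[OF assms(2,1)] assms(4)]
    by metis
  then obtain d where "d > 0"
    and "\<forall>i\<in>{..<n}. \<forall>x y. dist x y < d \<longrightarrow> x \<in> K \<longrightarrow> y \<in> K \<longrightarrow> dist ((T ^^ i) x) ((T ^^ i) y) < e"
    using finite_common_delta[of "{..<n}" "\<lambda>i x y. x \<in> K \<longrightarrow> y \<in> K \<longrightarrow> dist ((T ^^ i) x) ((T ^^ i) y) < e"]
    by blast
  then have d: "\<And>i x y. i < n \<Longrightarrow> x \<in> K \<Longrightarrow> y \<in> K \<Longrightarrow> dist x y < d \<Longrightarrow>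
      dist ((T ^^ i) x) ((T ^^ i) y) < e"
    by blast
  obtain F where F: "finite F" "F \<subseteq> K" "K \<subseteq> (\<Union>x\<in>F. ball x d)"
    using compact_finite_net[OF assms(1) \<open>d > 0\<close>] by blast
  then show ?thesis
    using bowen_cover_of_net[OF assms(3) F(2,3) d] by blast
qed

lemma span_K_attained:
  assumes "\<exists>F. finite F \<and> F \<subseteq> K \<and> K \<subseteq> (\<Union>x\<in>F. bowen_ball T n x e)"
  obtains F where "finite F" "F \<subseteq> K" "K \<subseteq> (\<Union>x\<in>F. bowen_ball T n x e)"
    "card F = span_K T K n e"
proof -
  let ?S = "{card F | F. finite F \<and> F \<subseteq> K \<and> K \<subseteq> (\<Union>x\<in>F. bowen_ball T n x e)}"
  have "?S \<noteq> {}"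
    using assms by blast
  then have "Inf ?S \<in> ?S"
    by (rule Inf_nat_def1)
  then obtain F where "finite F" "F \<subseteq> K" "K \<subseteq> (\<Union>x\<in>F. bowen_ball T n x e)" "card F = Inf ?S"
    unfolding mem_Collect_eq by (elim exE conjE) simp
  then show ?thesis
    using that unfolding span_K_def by simp
qed

lemma bounded_top_complexity_if_equicontinuous:
  assumes "compact K" "equicontinuous_set T K"
  shows "bounded_top_complexity T K"
  unfolding bounded_top_complexity_def
proof (intro allI impI)
  fix e :: real
  assume "e > 0"
  then obtain d where "d > 0"
    and d: "\<And>i x y. x \<in> K \<Longrightarrow> y \<in> K \<Longrightarrow> dist x y < d \<Longrightarrow> dist ((T ^^ i) x) ((T ^^ i) y) < e"
    using assms(2) unfolding equicontinuous_set_def by metis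
  obtain F where F: "finite F" "F \<subseteq> K" "K \<subseteq> (\<Union>x\<in>F. ball x d)"
    using compact_finite_net[OF assms(1) \<open>d > 0\<close>] by blast
  have "span_K T K n e \<le> Suc (card F)" if "n \<ge> 1" for n
    using span_K_le_card[OF F(1,2) bowen_cover_of_net[OF that F(2,3) d]] by simp
  then show "\<exists>C::nat. C > 0 \<and> (\<forall>n\<ge>1. span_K T K n e \<le> C)"
    by blast
qed

definition orbit_separated :: "('a::metric_space \<Rightarrow> 'a) \<Rightarrow> real \<Rightarrow> 'a set \<Rightarrow> bool" where
  "orbit_separated T \<rho> E \<longleftrightarrow>
     (\<forall>a\<in>E. \<forall>b\<in>E. a \<noteq> b \<longrightarrow> (\<exists>i. \<rho> \<le> dist ((T ^^ i) a) ((T ^^ i) b)))"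

lemma card_orbit_separated_le_span_K:
  assumes "compact K" "\<And>i. continuous_on K (T ^^ i)" "\<rho> > 0"
    and "finite E" "E \<subseteq> K" "orbit_separated T \<rho> E"
  obtains n where "n \<ge> 1" "card E \<le> span_K T K n (\<rho>/2)"
proof -
  obtain w where w: "\<And>a b. a \<in> E \<Longrightarrow> b \<in> E \<Longrightarrow> a \<noteq> b \<Longrightarrow> \<rho> \<le> dist ((T ^^ w a b) a) ((T ^^ w a b) b)"
    using assms(6) unfolding orbit_separated_def by metis
  obtain k where k: "(\<lambda>(a, b). w a b) ` (E \<times> E) \<subseteq> {..<k}"
    using finite_nat_bounded[OF finite_imageI[OF finite_cartesian_product[OF assms(4,4)]]] by blast
  define n where "n = Suc k"
  have "n \<ge> 1"
    by (simp add: n_def)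
  have w_less: "w a b < n" if "a \<in> E" "b \<in> E" for a b
    using k that by (force simp: n_def)
  have "\<rho>/2 > 0"
    using assms(3) by simp
  then obtain F where F: "finite F" "F \<subseteq> K" "K \<subseteq> (\<Union>x\<in>F. bowen_ball T n x (\<rho>/2))"
    "card F = span_K T K n (\<rho>/2)"
    by (rule span_K_attained[OF bowen_cover_exists[OF assms(1,2) \<open>n \<ge> 1\<close>]])
  have "\<forall>a\<in>E. \<exists>c\<in>F. bowen_dist T n c a < \<rho>/2"
    using F(3) assms(5) unfolding bowen_ball_def by blast
  then obtain f where f: "\<And>a. a \<in> E \<Longrightarrow> f a \<in> F \<and> bowen_dist T n (f a) a < \<rho>/2"
    by metis
  have "inj_on f E"
  proof (rule inj_onI, rule ccontr)
    fix a b
    assume ab: "a \<in> E" "b \<in> E" "f a = f b" "a \<noteq> b"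
    let ?i = "w a b" and ?c = "f a"
    have "dist ((T ^^ ?i) ?c) ((T ^^ ?i) a) < \<rho>/2" "dist ((T ^^ ?i) ?c) ((T ^^ ?i) b) < \<rho>/2"
      using f[OF ab(1)] f[OF ab(2)] w_less[OF ab(1,2)] ab(3)
      unfolding bowen_dist_less_iff[OF \<open>n \<ge> 1\<close>] by auto
    moreover have "dist ((T ^^ ?i) a) ((T ^^ ?i) b) \<le>
        dist ((T ^^ ?i) ?c) ((T ^^ ?i) a) + dist ((T ^^ ?i) ?c) ((T ^^ ?i) b)"
      by (rule dist_triangle3)
    ultimately show False
      using w[OF ab(1,2,4)] by linarith
  qed
  moreover have "f ` E \<subseteq> F"
    using f by auto
  ultimately have "card E \<le> span_K T K n (\<rho>/2)"
    using card_inj_on_le[OF _ _ F(1)] F(4) by metis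
  with \<open>n \<ge> 1\<close> show ?thesis
    using that by blast
qed

lemma maximal_orbit_separated_shadows:
  assumes "orbit_separated T \<rho> E" "finite E" "E \<subseteq> K"
    and max: "\<And>E'. finite E' \<Longrightarrow> E' \<subseteq> K \<Longrightarrow> orbit_separated T \<rho> E' \<Longrightarrow> card E' \<le> card E"
    and "\<rho> > 0" "y \<in> K"
  shows "\<exists>a\<in>E. \<forall>i. dist ((T ^^ i) a) ((T ^^ i) y) < \<rho>"
proof (rule ccontr)
  assume far: "\<not> ?thesis"
  then have "y \<notin> E"
    using \<open>\<rho> > 0\<close> by force
  have "orbit_separated T \<rho> (insert y E)"
    using assms(1) far unfolding orbit_separated_def by (auto simp: not_less dist_commute)
  then have "card (insert y E) \<le> card E"
    using max assms(2,3,6) by blast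
  with \<open>y \<notin> E\<close> \<open>finite E\<close> show False
    by simp
qed

lemma finite_orbit_net_if_bounded_top_complexity:
  assumes "compact K" "\<And>i. continuous_on K (T ^^ i)" "bounded_top_complexity T K" "\<rho> > 0"
  shows "\<exists>E. finite E \<and> (\<forall>y\<in>K. \<exists>a\<in>E. \<forall>i. dist ((T ^^ i) a) ((T ^^ i) y) < \<rho>)"
proof -
  obtain C :: nat where C: "\<And>n. n \<ge> 1 \<Longrightarrow> span_K T K n (\<rho>/2) \<le> C"
    using assms(3,4) unfolding bounded_top_complexity_def by (meson half_gt_zero)
  let ?Sep = "\<lambda>E. finite E \<and> E \<subseteq> K \<and> orbit_separated T \<rho> E"
  have "card E < Suc C" if "?Sep E" for E
  proof -
    from that have "finite E" "E \<subseteq> K" "orbit_separated T \<rho> E"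
      by auto
    then obtain n where "n \<ge> 1" "card E \<le> span_K T K n (\<rho>/2)"
      by (rule card_orbit_separated_le_span_K[OF assms(1,2,4)])
    with C show ?thesis
      by (meson le_imp_less_Suc order_trans)
  qed
  moreover have "?Sep {}"
    by (simp add: orbit_separated_def)
  ultimately obtain E where "?Sep E" and "\<forall>E'. ?Sep E' \<longrightarrow> card E' \<le> card E"
    using ex_has_greatest_nat[of ?Sep "{}" card "Suc C"] by blast
  with maximal_orbit_separated_shadows[of T \<rho> E K] assms(4) show ?thesis
    by blast
qed

lemma compact_orbit_shadow:
  fixes K :: "'a::metric_space set"
  assumes "compact K" "\<And>i. continuous_on K (T ^^ i)"
  shows "compact {y \<in> K. \<forall>i. dist ((T ^^ i) a) ((T ^^ i) y) \<le> \<rho>}"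
proof -
  have "closed (K \<inter> (T ^^ i) -` cball ((T ^^ i) a) \<rho>)" for i
    by (rule continuous_closed_preimage[OF assms(2) compact_imp_closed[OF assms(1)] closed_cball])
  then have "compact (K \<inter> (\<Inter>i. K \<inter> (T ^^ i) -` cball ((T ^^ i) a) \<rho>))"
    by (intro compact_Int_closed[OF assms(1)] closed_INT) blast
  moreover have "{y \<in> K. \<forall>i. dist ((T ^^ i) a) ((T ^^ i) y) \<le> \<rho>} =
      K \<inter> (\<Inter>i. K \<inter> (T ^^ i) -` cball ((T ^^ i) a) \<rho>)"
    by auto
  ultimately show ?thesis
    by simp
qed

lemma equicontinuous_if_finite_orbit_nets:
  assumes "compact K" "\<And>i. continuous_on K (T ^^ i)"
    and nets: "\<And>\<rho>. \<rho> > 0 \<Longrightarrow> \<exists>E. finite E \<and> (\<forall>y\<in>K. \<exists>a\<in>E. \<forall>i. dist ((T ^^ i) a) ((T ^^ i) y) < \<rho>)"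
  shows "equicontinuous_set T K"
  unfolding equicontinuous_set_def
proof (intro allI impI)
  fix e :: real
  assume "e > 0"
  define \<rho> where "\<rho> = e / 4"
  have "\<rho> > 0"
    using \<open>e > 0\<close> by (simp add: \<rho>_def)
  then obtain E where "finite E" and E: "\<forall>y\<in>K. \<exists>a\<in>E. \<forall>i. dist ((T ^^ i) a) ((T ^^ i) y) < \<rho>"
    using nets by blast
  define S where "S a = {y \<in> K. \<forall>i. dist ((T ^^ i) a) ((T ^^ i) y) \<le> \<rho>}" for a
  have "compact (S a)" for a
    unfolding S_def by (rule compact_orbit_shadow[OF assms(1,2)])
  then obtain d where "d > 0"
    and d: "\<forall>a\<in>E. \<forall>b\<in>E. \<forall>x\<in>S a. \<forall>y\<in>S b. dist x y < d \<longrightarrow> S a \<inter> S b \<noteq> {}"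
    using finite_compact_family_meet_if_close[OF \<open>finite E\<close>, of S] by blast
  have "dist ((T ^^ n) x) ((T ^^ n) y) < e" if "x \<in> K" "y \<in> K" "dist x y < d" for n x y
  proof -
    obtain a where "a \<in> E" and a: "\<forall>i. dist ((T ^^ i) a) ((T ^^ i) x) < \<rho>"
      using E \<open>x \<in> K\<close> by blast
    obtain b where "b \<in> E" and b: "\<forall>i. dist ((T ^^ i) b) ((T ^^ i) y) < \<rho>"
      using E \<open>y \<in> K\<close> by blast
    have "x \<in> S a" "y \<in> S b"
      using a b that by (auto simp: S_def less_imp_le)
    then obtain z where "z \<in> S a" "z \<in> S b"
      using d \<open>a \<in> E\<close> \<open>b \<in> E\<close> \<open>dist x y < d\<close> by blast
    then have "dist ((T ^^ n) a) ((T ^^ n) z) \<le> \<rho>" "dist ((T ^^ n) b) ((T ^^ n) z) \<le> \<rho>"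
      by (auto simp: S_def)
    moreover have "dist ((T ^^ n) x) ((T ^^ n) y) \<le> dist ((T ^^ n) x) ((T ^^ n) z) + dist ((T ^^ n) z) ((T ^^ n) y)"
      "dist ((T ^^ n) x) ((T ^^ n) z) \<le> dist ((T ^^ n) a) ((T ^^ n) x) + dist ((T ^^ n) a) ((T ^^ n) z)"
      "dist ((T ^^ n) z) ((T ^^ n) y) \<le> dist ((T ^^ n) b) ((T ^^ n) z) + dist ((T ^^ n) b) ((T ^^ n) y)"
      by (rule dist_triangle dist_triangle3)+
    ultimately show ?thesis
      using a[rule_format, of n] b[rule_format, of n] unfolding \<rho>_def by linarith
  qed
  with \<open>d > 0\<close> show "\<exists>\<delta>>0. \<forall>n. \<forall>x\<in>K. \<forall>y\<in>K. dist x y < \<delta> \<longrightarrow> dist ((T ^^ n) x) ((T ^^ n) y) < e"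
    by blast
qed

theorem mainTheorem1:
  fixes X K :: "'a::metric_space set" and T :: "'a \<Rightarrow> 'a"
  assumes "tds X T" and "K \<subseteq> X" and "compact K"
  shows "bounded_top_complexity T K \<longleftrightarrow> equicontinuous_set T K"
proof
  have cont: "continuous_on K (T ^^ i)" for i
    using tds_continuous_on_funpow[OF assms(1)] assms(2) by (rule continuous_on_subset)
  show "equicontinuous_set T K" if "bounded_top_complexity T K"
    using equicontinuous_if_finite_orbit_nets[OF assms(3) cont]
      finite_orbit_net_if_bounded_top_complexity[OF assms(3) cont that] by blast
  show "bounded_top_complexity T K" if "equicontinuous_set T K"
    using bounded_top_complexity_if_equicontinuous[OF assms(3) that] .
qed

end
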